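(* Let $N\ge 2$ and $0<\gamma_1\le\gamma_2\le\dots\le\gamma_N$. Among the spanning trees $T$ on $\{1,\dots,N\}$ that maximize $\rho(T)$, there is one in which vertex $1$ has exactly one neighbor, namely vertex $2$.
   Context: For distinct $i,j$ put $\varphi(i,j)=\log_2\!\big(\gamma_i+\frac{\gamma_i}{\gamma_i+\gamma_j}\big)$. For a spanning tree $T$ on $\{1,\dots,N\}$ define $\rho(T)=\min\{\varphi(i,j): \{i,j\}\in E(T),\ \gamma_i\le\gamma_j\}$ (equivalently the minimum of $\varphi(i,j)$ over all ordered pairs $(i,j)$ with $\{i,j\}\in E(T)$). *)

theory Defs
  imports Complex_Main
begin

definition is_graph :: "nat \<Rightarrow> nat set set \<Rightarrow> bool" where
  "is_graph N E \<longleftrightarrow> (\<forall>e\<in>E. \<exists>i j. e = {i, j} \<and> i \<noteq> j \<and> i \<in> {1..N} \<and> j \<in> {1..N})"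

definition adj :: "nat set set \<Rightarrow> (nat \<times> nat) set" where
  "adj E = {(i, j). {i, j} \<in> E \<and> i \<noteq> j}"

definition connected_graph :: "nat \<Rightarrow> nat set set \<Rightarrow> bool" where
  "connected_graph N E \<longleftrightarrow> (\<forall>i\<in>{1..N}. \<forall>j\<in>{1..N}. (i, j) \<in> (adj E)\<^sup>*)"

definition is_cycle :: "nat set set \<Rightarrow> nat list \<Rightarrow> bool" where
  "is_cycle E vs \<longleftrightarrow> length vs \<ge> 3 \<and> distinct vs
     \<and> (\<forall>k < length vs - 1. {vs ! k, vs ! Suc k} \<in> E)
     \<and> {last vs, hd vs} \<in> E"

definition acyclic_graph :: "nat set set \<Rightarrow> bool" where
  "acyclic_graph E \<longleftrightarrow> \<not> (\<exists>vs. is_cycle E vs)"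

definition spanning_tree :: "nat \<Rightarrow> nat set set \<Rightarrow> bool" where
  "spanning_tree N T \<longleftrightarrow> is_graph N T \<and> connected_graph N T \<and> acyclic_graph T"

definition phi :: "(nat \<Rightarrow> real) \<Rightarrow> nat \<Rightarrow> nat \<Rightarrow> real" where
  "phi \<gamma> i j = log 2 (\<gamma> i + \<gamma> i / (\<gamma> i + \<gamma> j))"

definition rho :: "(nat \<Rightarrow> real) \<Rightarrow> nat set set \<Rightarrow> real" where
  "rho \<gamma> T = Min {phi \<gamma> i j | i j. {i, j} \<in> T \<and> i \<noteq> j}"

end

theory Submission
  imports Defs
begin

text \<open>Take a spanning tree \<open>T\<^sub>0\<close> maximizing \<open>\<rho>\<close>, replace every edge \<open>{1,j}\<close> by \<open>{2,j}\<close> and add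
  the edge \<open>{1,2}\<close>. Since \<open>\<phi>(i,j)\<close> increases with \<open>\<gamma>\<^sub>i\<close> and decreases with \<open>\<gamma>\<^sub>j\<close>, and
  \<open>\<phi>(i,j) \<le> \<phi>(j,i)\<close> when \<open>\<gamma>\<^sub>i \<le> \<gamma>\<^sub>j\<close>, the values \<open>\<phi>\<close> on the new edges dominate values
  \<open>\<phi>(1,j)\<close> on edges of \<open>T\<^sub>0\<close>. The new graph is connected and vertex 1 has only the
  neighbour 2 in it, so any spanning tree inside it is optimal and has the required shape.\<close>

lemma sym_adj: "sym (adj E)"
  unfolding adj_def sym_def by (auto simp: insert_commute)

lemma rtrancl_adj_sym: "(a, b) \<in> (adj E)\<^sup>* \<Longrightarrow> (b, a) \<in> (adj E)\<^sup>*"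
  using sym_rtrancl[OF sym_adj] by (meson symD)

lemma is_graph_subset: "is_graph N E \<Longrightarrow> E' \<subseteq> E \<Longrightarrow> is_graph N E'"
  unfolding is_graph_def by blast

lemma is_graph_subset_Pow: "is_graph N E \<Longrightarrow> E \<subseteq> Pow {1..N}"
  unfolding is_graph_def by fastforce

lemma is_graph_finite: "is_graph N E \<Longrightarrow> finite E"
  by (meson is_graph_subset_Pow finite_Pow_iff finite_atLeastAtMost finite_subset)

lemma is_graph_vertices: "is_graph N E \<Longrightarrow> {i, j} \<in> E \<Longrightarrow> i \<in> {1..N} \<and> j \<in> {1..N}"
  unfolding is_graph_def by (fastforce simp: doubleton_eq_iff)

lemma connected_graph_if_adj_subset:
  assumes "connected_graph N E" "adj E \<subseteq> (adj E')\<^sup>*"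
  shows "connected_graph N E'"
  using assms rtrancl_subset_rtrancl unfolding connected_graph_def by blast

lemma connected_graph_has_neighbour:
  assumes "connected_graph N E" "i \<in> {1..N}" "j \<in> {1..N}" "i \<noteq> j"
  obtains k where "{i, k} \<in> E" "k \<noteq> i"
proof -
  have "(i, j) \<in> (adj E)\<^sup>*" using assms unfolding connected_graph_def by blast
  then obtain k where "(i, k) \<in> adj E" using \<open>i \<noteq> j\<close> by (metis converse_rtranclE)
  then show thesis using that unfolding adj_def by auto
qed

lemma is_cycle_path_from_hd:
  assumes "is_cycle E vs" "k < length vs"
  shows "(hd vs, vs ! k) \<in> (adj (E - {{last vs, hd vs}}))\<^sup>*"
  using assms(2)
proof (induction k)
  case 0
  then show ?case by (simp add: hd_conv_nth)
next
  case (Suc k)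
  have dist: "distinct vs" and len: "length vs \<ge> 3"
    and step: "{vs ! k, vs ! Suc k} \<in> E"
    using assms(1) Suc.prems unfolding is_cycle_def by auto
  have ne: "vs \<noteq> []" using len by auto
  have "vs ! k \<noteq> last vs"
    using dist Suc.prems by (auto simp: last_conv_nth[OF ne] nth_eq_iff_index_eq)
  moreover have "vs ! Suc k \<noteq> hd vs"
    using nth_eq_iff_index_eq[OF dist, of "Suc k" 0] Suc.prems ne by (auto simp: hd_conv_nth)
  moreover have "vs ! k \<noteq> hd vs \<or> vs ! Suc k \<noteq> last vs"
  proof -
    have "vs ! k = hd vs \<Longrightarrow> k = 0"
      using nth_eq_iff_index_eq[OF dist, of k 0] Suc.prems ne by (auto simp: hd_conv_nth)
    moreover have "vs ! Suc k = last vs \<Longrightarrow> Suc k = length vs - 1"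
      using nth_eq_iff_index_eq[OF dist, of "Suc k" "length vs - 1"] Suc.prems ne
      by (auto simp: last_conv_nth)
    ultimately show ?thesis using len by linarith
  qed
  ultimately have "{vs ! k, vs ! Suc k} \<noteq> {last vs, hd vs}"
    by (auto simp: doubleton_eq_iff)
  moreover have "vs ! k \<noteq> vs ! Suc k"
    using dist Suc.prems by (simp add: nth_eq_iff_index_eq)
  ultimately have "(vs ! k, vs ! Suc k) \<in> adj (E - {{last vs, hd vs}})"
    using step unfolding adj_def by simp
  with Suc show ?case by (meson Suc_lessD rtrancl_into_rtrancl)
qed

text \<open>Deleting the closing edge of a cycle keeps its endpoints connected along the rest of the cycle.\<close>
lemma connected_graph_Diff_cycle_edge:
  assumes conn: "connected_graph N E" and cyc: "is_cycle E vs"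
  shows "connected_graph N (E - {{last vs, hd vs}})"
proof -
  let ?E' = "E - {{last vs, hd vs}}"
  have "vs \<noteq> []" using cyc unfolding is_cycle_def by auto
  then have hl: "(hd vs, last vs) \<in> (adj ?E')\<^sup>*"
    using is_cycle_path_from_hd[OF cyc, of "length vs - 1"] by (simp add: last_conv_nth)
  have "adj E \<subseteq> (adj ?E')\<^sup>*"
  proof
    fix p assume "p \<in> adj E"
    then obtain a b where p: "p = (a, b)" "{a, b} \<in> E" "a \<noteq> b" unfolding adj_def by auto
    show "p \<in> (adj ?E')\<^sup>*"
    proof (cases "{a, b} = {last vs, hd vs}")
      case True
      then show ?thesis using p hl rtrancl_adj_sym[OF hl] by (auto simp: doubleton_eq_iff)
    next
      case False
      then show ?thesis using p unfolding adj_def by auto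
    qed
  qed
  then show ?thesis using connected_graph_if_adj_subset[OF conn] by blast
qed

lemma spanning_tree_subset_exists:
  "is_graph N E \<Longrightarrow> connected_graph N E \<Longrightarrow> \<exists>T\<subseteq>E. spanning_tree N T"
proof (induction "card E" arbitrary: E rule: less_induct)
  case less
  show ?case
  proof (cases "acyclic_graph E")
    case True
    then show ?thesis using less.prems unfolding spanning_tree_def by blast
  next
    case False
    then obtain vs where cyc: "is_cycle E vs" unfolding acyclic_graph_def by blast
    let ?E' = "E - {{last vs, hd vs}}"
    have "{last vs, hd vs} \<in> E" using cyc unfolding is_cycle_def by simp
    with is_graph_finite[OF less.prems(1)] have "card ?E' < card E"
      by (rule card_Diff1_less)
    moreover have "is_graph N ?E'" using is_graph_subset[OF less.prems(1)] by blast
    moreover have "connected_graph N ?E'"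
      using connected_graph_Diff_cycle_edge[OF less.prems(2) cyc] .
    ultimately obtain T where "T \<subseteq> ?E'" "spanning_tree N T" using less.hyps by blast
    then show ?thesis by blast
  qed
qed

definition complete_graph :: "nat \<Rightarrow> nat set set" where
  "complete_graph N = {{i, j} | i j. i \<noteq> j \<and> i \<in> {1..N} \<and> j \<in> {1..N}}"

lemma spanning_tree_exists: "\<exists>T. spanning_tree N T"
proof -
  have "is_graph N (complete_graph N)"
    unfolding complete_graph_def is_graph_def by blast
  moreover have "connected_graph N (complete_graph N)"
    unfolding connected_graph_def adj_def complete_graph_def
    by (metis (mono_tags, lifting) case_prodI mem_Collect_eq r_into_rtrancl rtrancl.rtrancl_refl)
  ultimately show ?thesis using spanning_tree_subset_exists by blast
qed

lemma finite_spanning_trees: "finite {T. spanning_tree N T}"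
proof (rule finite_subset)
  show "{T. spanning_tree N T} \<subseteq> Pow (Pow {1..N})"
    unfolding spanning_tree_def using is_graph_subset_Pow by blast
qed simp

lemma finite_rho_values:
  assumes "is_graph N T"
  shows "finite {phi \<gamma> i j | i j. {i, j} \<in> T \<and> i \<noteq> j}"
proof (rule finite_subset)
  show "{phi \<gamma> i j | i j. {i, j} \<in> T \<and> i \<noteq> j}
          \<subseteq> (\<lambda>(i, j). phi \<gamma> i j) ` ({1..N} \<times> {1..N})"
    using is_graph_vertices[OF assms] by fastforce
qed simp

lemma rho_le_phi:
  assumes "is_graph N T" "{i, j} \<in> T" "i \<noteq> j"
  shows "rho \<gamma> T \<le> phi \<gamma> i j"
  unfolding rho_def using finite_rho_values[OF assms(1)] assms(2,3) by (intro Min_le) auto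

lemma rho_ge:
  assumes "is_graph N T" "{a, b} \<in> T" "a \<noteq> b"
    and "\<And>i j. {i, j} \<in> T \<Longrightarrow> i \<noteq> j \<Longrightarrow> c \<le> phi \<gamma> i j"
  shows "c \<le> rho \<gamma> T"
  unfolding rho_def using finite_rho_values[OF assms(1)] assms(2-4)
  by (intro Min.boundedI) auto

lemma optimal_spanning_tree_exists:
  "\<exists>T. spanning_tree N T \<and> (\<forall>T'. spanning_tree N T' \<longrightarrow> rho \<gamma> T' \<le> rho \<gamma> T)"
proof -
  let ?S = "{T. spanning_tree N T}"
  have fin: "finite (rho \<gamma> ` ?S)" using finite_spanning_trees by blast
  have "Max (rho \<gamma> ` ?S) \<in> rho \<gamma> ` ?S"
    using fin spanning_tree_exists by (intro Max_in) auto
  then obtain T where "T \<in> ?S" "rho \<gamma> T = Max (rho \<gamma> ` ?S)" by (rule imageE) simp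
  then show ?thesis using fin by auto
qed

lemma phi_mono:
  assumes "0 < \<gamma> i" "0 < \<gamma> j"
    and "\<gamma> i + \<gamma> i / (\<gamma> i + \<gamma> j) \<le> \<gamma> k + \<gamma> k / (\<gamma> k + \<gamma> l)"
  shows "phi \<gamma> i j \<le> phi \<gamma> k l"
proof -
  have "0 < \<gamma> i + \<gamma> i / (\<gamma> i + \<gamma> j)" using assms(1,2) by (simp add: add_pos_pos)
  then show ?thesis unfolding phi_def using assms(3) by simp
qed

lemma phi_mono_left:
  assumes "0 < \<gamma> i" "\<gamma> i \<le> \<gamma> k" "0 < \<gamma> j"
  shows "phi \<gamma> i j \<le> phi \<gamma> k j"
proof (rule phi_mono[OF assms(1,3)])
  have "\<gamma> i / (\<gamma> i + \<gamma> j) \<le> \<gamma> k / (\<gamma> k + \<gamma> j)"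
    using assms by (simp add: divide_simps) (simp add: algebra_simps mult_right_mono)
  then show "\<gamma> i + \<gamma> i / (\<gamma> i + \<gamma> j) \<le> \<gamma> k + \<gamma> k / (\<gamma> k + \<gamma> j)"
    using assms(2) by simp
qed

lemma phi_antimono_right:
  assumes "0 < \<gamma> i" "0 < \<gamma> j" "\<gamma> j \<le> \<gamma> l"
  shows "phi \<gamma> i l \<le> phi \<gamma> i j"
  using assms by (intro phi_mono) (auto simp: frac_le)

lemma phi_swap_le:
  assumes "0 < \<gamma> i" "\<gamma> i \<le> \<gamma> j"
  shows "phi \<gamma> i j \<le> phi \<gamma> j i"
proof (rule phi_mono)
  have "\<gamma> i / (\<gamma> i + \<gamma> j) \<le> \<gamma> j / (\<gamma> i + \<gamma> j)"
    using assms by (simp add: divide_right_mono)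
  then show "\<gamma> i + \<gamma> i / (\<gamma> i + \<gamma> j) \<le> \<gamma> j + \<gamma> j / (\<gamma> j + \<gamma> i)"
    using assms by (simp add: add.commute)
qed (use assms in auto)

definition rewire :: "nat \<Rightarrow> nat \<Rightarrow> nat set set \<Rightarrow> nat set set" where
  "rewire u v E = {e \<in> E. u \<notin> e} \<union> {{u, v}} \<union> {{v, j} | j. {u, j} \<in> E \<and> j \<noteq> u \<and> j \<noteq> v}"

lemma is_graph_rewire:
  assumes "is_graph N E" "u \<in> {1..N}" "v \<in> {1..N}" "u \<noteq> v"
  shows "is_graph N (rewire u v E)"
  using assms is_graph_vertices[OF assms(1)] unfolding is_graph_def rewire_def by fastforce

lemma rewire_neighbour:
  assumes "{u, k} \<in> rewire u v E" "k \<noteq> u" "u \<noteq> v"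
  shows "k = v"
  using assms unfolding rewire_def by (auto simp: doubleton_eq_iff)

lemma connected_graph_rewire:
  assumes conn: "connected_graph N E" and "u \<noteq> v"
  shows "connected_graph N (rewire u v E)"
proof -
  let ?G = "rewire u v E"
  have edge: "(a, b) \<in> (adj ?G)\<^sup>*" if "{a, b} \<in> ?G" "a \<noteq> b" for a b
    using that unfolding adj_def by blast
  have uv: "(u, v) \<in> (adj ?G)\<^sup>*" using edge \<open>u \<noteq> v\<close> unfolding rewire_def by blast
  have via_v: "(u, j) \<in> (adj ?G)\<^sup>*" if "{u, j} \<in> E" "j \<noteq> u" for j
  proof (cases "j = v")
    case False
    then have "(v, j) \<in> (adj ?G)\<^sup>*" using edge that unfolding rewire_def by blast
    then show ?thesis using uv by (meson rtrancl_trans)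
  qed (use uv in simp)
  have "adj E \<subseteq> (adj ?G)\<^sup>*"
  proof
    fix p assume "p \<in> adj E"
    then obtain a b where p: "p = (a, b)" "{a, b} \<in> E" "a \<noteq> b" unfolding adj_def by auto
    consider "a = u" | "b = u" | "u \<notin> {a, b}" by blast
    then show "p \<in> (adj ?G)\<^sup>*"
    proof cases
      case 1 then show ?thesis using p via_v by blast
    next
      case 2 then show ?thesis using p via_v[of a] rtrancl_adj_sym by (metis insert_commute)
    next
      case 3 then show ?thesis using p edge unfolding rewire_def by blast
    qed
  qed
  then show ?thesis using connected_graph_if_adj_subset[OF conn] by blast
qed

text \<open>The vertex \<open>u\<close> needs some neighbour \<open>w\<close> in \<open>E\<close>: \<open>\<phi>(u,w)\<close> is what bounds the values
  on the new edge \<open>{u,v}\<close>.\<close>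
lemma rho_le_phi_rewire:
  assumes E: "is_graph N E" and w: "{u, w} \<in> E" "w \<noteq> u"
    and u: "0 < \<gamma> u" "\<gamma> u \<le> \<gamma> v"
    and nbs: "\<And>j. {u, j} \<in> E \<Longrightarrow> j \<noteq> u \<Longrightarrow> \<gamma> v \<le> \<gamma> j"
    and ij: "{i, j} \<in> rewire u v E" "i \<noteq> j"
  shows "rho \<gamma> E \<le> phi \<gamma> i j"
proof -
  have v: "0 < \<gamma> v" using u by linarith
  consider "{i, j} \<in> E" | "{i, j} = {u, v}"
    | j' where "{i, j} = {v, j'}" "{u, j'} \<in> E" "j' \<noteq> u"
    using ij(1) unfolding rewire_def by blast
  then show ?thesis
  proof cases
    case 1
    then show ?thesis using rho_le_phi[OF E _ ij(2)] by blast
  next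
    case 2
    have "rho \<gamma> E \<le> phi \<gamma> u w" using rho_le_phi[OF E w(1)] w(2) by simp
    also have "\<dots> \<le> phi \<gamma> u v" using u v nbs[OF w] by (intro phi_antimono_right)
    finally have "rho \<gamma> E \<le> phi \<gamma> u v" .
    moreover have "phi \<gamma> u v \<le> phi \<gamma> v u" using u by (rule phi_swap_le)
    ultimately show ?thesis using 2 ij(2) by (auto simp: doubleton_eq_iff)
  next
    case 3
    have j': "\<gamma> v \<le> \<gamma> j'" using nbs[OF 3(2,3)] .
    have "rho \<gamma> E \<le> phi \<gamma> u j'" using rho_le_phi[OF E 3(2)] 3(3) by simp
    also have "\<dots> \<le> phi \<gamma> v j'" using u v j' by (intro phi_mono_left) auto
    finally have "rho \<gamma> E \<le> phi \<gamma> v j'" .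
    moreover have "phi \<gamma> v j' \<le> phi \<gamma> j' v" using v j' by (rule phi_swap_le)
    ultimately show ?thesis using 3(1) ij(2) by (auto simp: doubleton_eq_iff)
  qed
qed

theorem lemma1:
  fixes N :: nat and \<gamma> :: "nat \<Rightarrow> real"
  assumes "N \<ge> 2"
    and "\<gamma> 1 > 0"
    and "\<And>i j. 1 \<le> i \<Longrightarrow> i \<le> j \<Longrightarrow> j \<le> N \<Longrightarrow> \<gamma> i \<le> \<gamma> j"
  shows "\<exists>T. spanning_tree N T
           \<and> (\<forall>T'. spanning_tree N T' \<longrightarrow> rho \<gamma> T' \<le> rho \<gamma> T)
           \<and> {j. {1, j} \<in> T \<and> j \<noteq> 1} = {2}"
proof -
  have vs: "(1::nat) \<in> {1..N}" "(2::nat) \<in> {1..N}" "(1::nat) \<noteq> 2" using assms(1) by auto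
  have \<gamma>12: "\<gamma> 1 \<le> \<gamma> 2" using assms(1,3) by simp
  obtain T0 where T0: "spanning_tree N T0" "\<forall>T'. spanning_tree N T' \<longrightarrow> rho \<gamma> T' \<le> rho \<gamma> T0"
    using optimal_spanning_tree_exists by blast
  then have T0g: "is_graph N T0" and T0c: "connected_graph N T0"
    unfolding spanning_tree_def by auto
  have \<gamma>_nbs: "\<gamma> 2 \<le> \<gamma> j" if "{1, j} \<in> T0" "j \<noteq> 1" for j
    using is_graph_vertices[OF T0g that(1)] that(2) assms(3)[of 2 j] by simp
  obtain w where w: "{1, w} \<in> T0" "w \<noteq> 1" using connected_graph_has_neighbour[OF T0c vs] .
  let ?G = "rewire 1 2 T0"
  obtain T where TG: "T \<subseteq> ?G" and T: "spanning_tree N T"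
    using spanning_tree_subset_exists is_graph_rewire[OF T0g vs] connected_graph_rewire[OF T0c vs(3)]
    by blast
  then have Tg: "is_graph N T" and Tc: "connected_graph N T" unfolding spanning_tree_def by auto
  have only_2: "k = 2" if "{1, k} \<in> T" "k \<noteq> 1" for k
    using rewire_neighbour[OF _ that(2) vs(3)] that(1) TG by blast
  obtain k where "{1, k} \<in> T" "k \<noteq> 1" using connected_graph_has_neighbour[OF Tc vs] .
  then have e12: "{1, 2} \<in> T" using only_2 by blast
  have "rho \<gamma> T0 \<le> rho \<gamma> T"
  proof (rule rho_ge[OF Tg e12])
    show "rho \<gamma> T0 \<le> phi \<gamma> i j" if "{i, j} \<in> T" "i \<noteq> j" for i j
      using rho_le_phi_rewire[OF T0g w assms(2) \<gamma>12 \<gamma>_nbs] that TG by blast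
  qed simp
  then have "\<forall>T'. spanning_tree N T' \<longrightarrow> rho \<gamma> T' \<le> rho \<gamma> T"
    using T0(2) by (meson order_trans)
  moreover have "{j. {1, j} \<in> T \<and> j \<noteq> 1} = {2}"
  proof
    show "{j. {1, j} \<in> T \<and> j \<noteq> 1} \<subseteq> {2}" using only_2 by blast
    show "{2} \<subseteq> {j. {1, j} \<in> T \<and> j \<noteq> 1}" using e12 by simp
  qed
  ultimately show ?thesis using T by blast
qed

end
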